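(* Let $\mathbf{F}=(f_{ij})$ be an $n\times n$ nonnegative matrix, $\vec z=(z_1,\dots,z_n)^{\mathrm T}$ a nonnegative column vector and $\vec y=(y_1,\dots,y_n)$ a nonnegative row vector. Define $T^{\mathrm{in}}_i=\sum_{j} f_{ij}+z_i$ and $T^{\mathrm{out}}_j=\sum_{i} f_{ij}+y_j$, assume all are positive, and assume steady state: $T^{\mathrm{in}}_\ell=T^{\mathrm{out}}_\ell$ for all $\ell$. Let $\mathbf G=(g_{ij})$ with $g_{ij}=f_{ij}/T^{\mathrm{out}}_j$ and $\mathbf G'=(g'_{ij})$ with $g'_{ij}=f_{ij}/T^{\mathrm{in}}_i$. Then $\sum_{i=1}^n(\mathbf G\vec z)_i=\sum_{i=1}^n(\vec y\mathbf G')_i$.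
   Context: $f_{ij}$ is the flow from node $j$ to node $i$, $z_i$ the boundary input to node $i$, $y_j$ the boundary output from node $j$. *)

theory Defs
  imports "HOL-Analysis.Analysis"
begin

text \<open>Flow matrix F with F\$i\$j = f_ij (flow from node j to node i),
  boundary inputs z (column vector), boundary outputs y (row vector).\<close>

definition T_in :: "real^'n^'n \<Rightarrow> real^'n \<Rightarrow> 'n \<Rightarrow> real" where
  "T_in F z i = (\<Sum>j\<in>UNIV. F$i$j) + z$i"

definition T_out :: "real^'n^'n \<Rightarrow> real^'n \<Rightarrow> 'n \<Rightarrow> real" where
  "T_out F y j = (\<Sum>i\<in>UNIV. F$i$j) + y$j"

definition G_mat :: "real^'n^'n \<Rightarrow> real^'n \<Rightarrow> real^'n^'n" where
  "G_mat F y = (\<chi> i j. F$i$j / T_out F y j)"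

definition G'_mat :: "real^'n^'n \<Rightarrow> real^'n \<Rightarrow> real^'n^'n" where
  "G'_mat F z = (\<chi> i j. F$i$j / T_in F z i)"

end

theory Submission
  imports Defs
begin

text \<open>Summing G z over its rows leaves, at each node j, the input z_j weighted by the share
  (T_j - y_j)/T_j of its throughflow that stays inside the network; symmetrically the sum of
  y G' weights y_j by (T_j - z_j)/T_j. The two weighted terms differ by exactly z_j - y_j,
  and summing the steady-state equations T_in = T_out over all nodes shows that total
  boundary input equals total boundary output, since the internal flows cancel.\<close>

lemma sum_G_mat_mult_vector:
  "(\<Sum>i\<in>UNIV. (G_mat F y *v z)$i) = (\<Sum>j\<in>UNIV. z$j * (\<Sum>i\<in>UNIV. F$i$j) / T_out F y j)"
proof -
  have "(\<Sum>i\<in>UNIV. (G_mat F y *v z)$i) = (\<Sum>i\<in>UNIV. \<Sum>j\<in>UNIV. F$i$j * z$j / T_out F y j)"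
    by (simp add: G_mat_def matrix_vector_mult_def)
  also have "\<dots> = (\<Sum>j\<in>UNIV. \<Sum>i\<in>UNIV. F$i$j * z$j / T_out F y j)"
    by (rule sum.swap)
  finally show ?thesis
    by (simp add: sum_distrib_left sum_divide_distrib mult.commute)
qed

lemma sum_vector_mult_G'_mat:
  "(\<Sum>j\<in>UNIV. (y v* G'_mat F z)$j) = (\<Sum>i\<in>UNIV. y$i * (\<Sum>j\<in>UNIV. F$i$j) / T_in F z i)"
proof -
  have "(\<Sum>j\<in>UNIV. (y v* G'_mat F z)$j) = (\<Sum>j\<in>UNIV. \<Sum>i\<in>UNIV. y$i * F$i$j / T_in F z i)"
    by (simp add: G'_mat_def vector_matrix_mult_def)
  also have "\<dots> = (\<Sum>i\<in>UNIV. \<Sum>j\<in>UNIV. y$i * F$i$j / T_in F z i)"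
    by (rule sum.swap)
  finally show ?thesis
    by (simp add: sum_distrib_left sum_divide_distrib)
qed

lemma steady_state_boundary_balance:
  assumes "\<And>l. T_in F z l = T_out F y l"
  shows "(\<Sum>l\<in>UNIV. z$l) = (\<Sum>l\<in>UNIV. y$l)"
proof -
  have "(\<Sum>l\<in>UNIV. \<Sum>j\<in>UNIV. F$l$j) + (\<Sum>l\<in>UNIV. z$l)
      = (\<Sum>l\<in>UNIV. \<Sum>i\<in>UNIV. F$i$l) + (\<Sum>l\<in>UNIV. y$l)"
    using assms by (simp add: T_in_def T_out_def flip: sum.distrib)
  then show ?thesis
    using sum.swap[of "\<lambda>i l. F$i$l" UNIV UNIV] by simp
qed

theorem proposition1:
  fixes F :: "real^'n^'n" and z y :: "real^'n"
  assumes F_nonneg: "\<And>i j. F$i$j \<ge> 0"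
    and z_nonneg: "\<And>i. z$i \<ge> 0"
    and y_nonneg: "\<And>j. y$j \<ge> 0"
    and Tin_pos: "\<And>i. T_in F z i > 0"
    and Tout_pos: "\<And>j. T_out F y j > 0"
    and steady: "\<And>l. T_in F z l = T_out F y l"
  shows "(\<Sum>i\<in>UNIV. (G_mat F y *v z)$i) = (\<Sum>i\<in>UNIV. (y v* G'_mat F z)$i)"
proof -
  define T where "T l = T_out F y l" for l
  have T_nonzero: "T l \<noteq> 0" for l
    using Tout_pos[of l] by (simp add: T_def)
  have col_sum: "(\<Sum>i\<in>UNIV. F$i$j) = T j - y$j" for j
    by (simp add: T_def T_out_def)
  have row_sum: "(\<Sum>j\<in>UNIV. F$i$j) = T i - z$i" for i
    using steady[of i] by (simp add: T_def T_in_def)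
  have "z$l * (T l - y$l) / T l - y$l * (T l - z$l) / T l = z$l - y$l" for l
    using T_nonzero[of l] by (simp add: field_simps)
  then have "(\<Sum>i\<in>UNIV. (G_mat F y *v z)$i) - (\<Sum>i\<in>UNIV. (y v* G'_mat F z)$i)
      = (\<Sum>l\<in>UNIV. z$l) - (\<Sum>l\<in>UNIV. y$l)"
    unfolding sum_G_mat_mult_vector sum_vector_mult_G'_mat
    by (simp add: col_sum row_sum steady T_def flip: sum_subtractf)
  then show ?thesis
    using steady_state_boundary_balance[OF steady] by simp
qed

end
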